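(* Let $k\ge 2$. Then for all sufficiently large $n$, $$N(CM,k,n)\ge\begin{cases} \frac{2n}{k+1} & \text{if } k \text{ is even and } n \text{ is even},\\[2pt] \frac{2n-1}{k+1} & \text{if } k \text{ is even and } n \text{ is odd},\\[2pt] \left\lceil \frac{n}{k}\,\mathsf{d}(k-1,n-1)\right\rceil & \text{if } k \text{ is odd and } n \text{ is even},\\[2pt] \left\lceil \frac{n-1}{2k}\,\mathsf{d}(k-1,n-1)\right\rceil & \text{if } k \text{ is odd and } n \text{ is odd}.\end{cases}$$
   Context: We are given $n$ balls, the set $[n]=\{1,\dots,n\}$, each colored with one of two colors by an unknown coloring. A ball $i$ is a majority ball if more than $n/2$ balls have the same color as $i$. A query is a subset $Q\subseteq[n]$ with $|Q|=k$. In the Counting Model (CM), the answer to a query $Q$ is the number $i\le k/2$ such that $Q$ contains exactly $i$ balls of one of the colors (and $k-i$ of the other); no indication of which color is given. A non-adaptive strategy is a family of queries $Q_1,\dots,Q_q$ fixed in advance. It succeeds if for every coloring, the answers determine the outcome: either every coloring consistent with the answers has no majority ball, or there is a ball that is a majority ball in every coloring consistent with the answers. $N(CM,k,n)$ is the minimum number of queries in a successful non-adaptive strategy. A 2-coloring of a finite set is balanced if the sizes of the two color classes differ by at most one. A hypergraph has Property C if its vertices can be 2-colored so that every edge is balanced. For $k\ge 2$, $\mathsf{d}(k,n)$ denotes the minimum number of edges of a $k$-uniform hypergraph on $n$ vertices that does not have Property C. *)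

theory Defs
  imports Main "HOL-Library.Extended_Nat"
begin

text \<open>Balls are the set {1..n}; a coloring is a function nat => bool
  (only its values on {1..n} matter).\<close>

definition is_query :: "nat \<Rightarrow> nat \<Rightarrow> nat set \<Rightarrow> bool" where
  "is_query k n Q \<longleftrightarrow> Q \<subseteq> {1..n} \<and> card Q = k"

definition cm_answer :: "(nat \<Rightarrow> bool) \<Rightarrow> nat set \<Rightarrow> nat" where
  "cm_answer c Q = min (card {x\<in>Q. c x}) (card {x\<in>Q. \<not> c x})"

definition majority_ball :: "nat \<Rightarrow> (nat \<Rightarrow> bool) \<Rightarrow> nat \<Rightarrow> bool" where
  "majority_ball n c i \<longleftrightarrow> i \<in> {1..n} \<and> 2 * card {j\<in>{1..n}. c j = c i} > n"

definition cm_consistent :: "nat set list \<Rightarrow> (nat \<Rightarrow> bool) \<Rightarrow> (nat \<Rightarrow> bool) \<Rightarrow> bool" where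
  "cm_consistent Qs c c' \<longleftrightarrow> (\<forall>Q \<in> set Qs. cm_answer c' Q = cm_answer c Q)"

definition cm_successful :: "nat \<Rightarrow> nat \<Rightarrow> nat set list \<Rightarrow> bool" where
  "cm_successful k n Qs \<longleftrightarrow>
     (\<forall>Q \<in> set Qs. is_query k n Q) \<and>
     (\<forall>c. (\<forall>c'. cm_consistent Qs c c' \<longrightarrow> \<not> (\<exists>i. majority_ball n c' i))
        \<or> (\<exists>i\<in>{1..n}. \<forall>c'. cm_consistent Qs c c' \<longrightarrow> majority_ball n c' i))"

text \<open>N(CM,k,n); infinity if no successful non-adaptive strategy exists.\<close>
definition N_CM :: "nat \<Rightarrow> nat \<Rightarrow> enat" where
  "N_CM k n = Inf (enat ` {q. \<exists>Qs. length Qs = q \<and> cm_successful k n Qs})"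

definition balanced_on :: "(nat \<Rightarrow> bool) \<Rightarrow> nat set \<Rightarrow> bool" where
  "balanced_on c e \<longleftrightarrow>
     (card {x\<in>e. c x} \<le> card {x\<in>e. \<not> c x} + 1 \<and> card {x\<in>e. \<not> c x} \<le> card {x\<in>e. c x} + 1)"

definition property_C :: "nat \<Rightarrow> nat set set \<Rightarrow> bool" where
  "property_C n E \<longleftrightarrow> (\<exists>c. \<forall>e\<in>E. balanced_on c e)"

definition d_C :: "nat \<Rightarrow> nat \<Rightarrow> nat" where
  "d_C k n = Inf {m. \<exists>E. (\<forall>e\<in>E. e \<subseteq> {1..n} \<and> card e = k) \<and> card E = m \<and> \<not> property_C n E}"

definition cm_bound :: "nat \<Rightarrow> nat \<Rightarrow> real" where
  "cm_bound k n =
     (if even k \<and> even n then 2 * real n / (real k + 1)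
      else if even k \<and> odd n then (2 * real n - 1) / (real k + 1)
      else if odd k \<and> even n then real_of_int \<lceil>real n / real k * real (d_C (k - 1) (n - 1))\<rceil>
      else real_of_int \<lceil>(real n - 1) / (2 * real k) * real (d_C (k - 1) (n - 1))\<rceil>)"

end

theory Submission
  imports Defs
begin

(*
  Counting-model answers see the number of True balls in a query only up to its mirror
  image |Q| - count.  Fix a coloring c with exactly n div 2 True balls.  For even n it is
  balanced, so a successful strategy must certify that every consistent coloring is
  balanced; for odd n it has a False majority, so the consistent colorings with a True
  majority must all disagree with c at a common ball.  Painting True a ball that lies in no
  query, or two private balls (balls of query degree 1) of a query with |Q|/2 - 1 True balls,
  yields consistent colorings that break this.  For even k this leaves at most one
  unqueried ball and few private balls, and double counting query degrees gives the bound.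
  For odd k, if fewer than d(k-1,n-1) queries meet a ball i (for odd n, one of two balls),
  these queries minus one ball of the pair have Property C as a hypergraph on n - 1
  vertices; a balanced coloring of them puts (k-1)/2 True balls in each such query, and
  then painting i True is undetectable.  So every ball (pair of balls) meets at least
  d(k-1,n-1) queries, and double counting again gives the bound.
*)

section \<open>Answers of the counting model under recoloring\<close>

definition count_true :: "(nat \<Rightarrow> bool) \<Rightarrow> nat set \<Rightarrow> nat" where
  "count_true c A = card {x\<in>A. c x}"

definition paint_true :: "(nat \<Rightarrow> bool) \<Rightarrow> nat set \<Rightarrow> nat \<Rightarrow> bool" where
  "paint_true c F x \<longleftrightarrow> c x \<or> x \<in> F"

lemma paint_true_outside [simp]: "x \<notin> F \<Longrightarrow> paint_true c F x = c x"
  by (simp add: paint_true_def)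

lemma card_filter_eq_sum: "finite A \<Longrightarrow> card {x\<in>A. P x} = (\<Sum>x\<in>A. if P x then 1 else 0)"
  by (simp add: sum.If_cases Int_def)

lemma count_true_le_card: "finite A \<Longrightarrow> count_true c A \<le> card A"
  unfolding count_true_def by (intro card_mono) auto

lemma count_true_paint_true:
  assumes "finite A" "F \<subseteq> A" "\<And>x. x \<in> F \<Longrightarrow> \<not> c x"
  shows "count_true (paint_true c F) A = count_true c A + card F"
proof -
  have "{x\<in>A. paint_true c F x} = {x\<in>A. c x} \<union> F" "{x\<in>A. c x} \<inter> F = {}"
    using assms(2,3) by (auto simp: paint_true_def)
  then show ?thesis
    using assms(1,2) unfolding count_true_def by (simp add: card_Un_disjoint finite_subset)
qed

lemma count_true_remove:
  assumes "finite A" "v \<in> A"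
  shows "count_true c A = count_true c (A - {v}) + (if c v then 1 else 0)"
proof -
  have "{x\<in>A. c x} = (if c v then insert v {x\<in>A - {v}. c x} else {x\<in>A - {v}. c x})"
    using assms(2) by auto
  then show ?thesis
    using assms(1) unfolding count_true_def by simp
qed

lemma cm_answer_eq_min:
  assumes "finite Q"
  shows "cm_answer c Q = min (count_true c Q) (card Q - count_true c Q)"
proof -
  have "{x\<in>Q. \<not> c x} = Q - {x\<in>Q. c x}" by auto
  then show ?thesis
    using assms unfolding cm_answer_def count_true_def by (simp add: card_Diff_subset)
qed

lemma cm_answer_cong: "(\<And>x. x \<in> Q \<Longrightarrow> c' x = c x) \<Longrightarrow> cm_answer c' Q = cm_answer c Q"
  unfolding cm_answer_def by (metis (mono_tags, lifting) Collect_cong)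

lemma cm_answer_paint_true_mirror:
  assumes "finite Q" "F \<subseteq> Q" "\<And>x. x \<in> F \<Longrightarrow> \<not> c x"
    and "2 * count_true c Q + card F = card Q"
  shows "cm_answer (paint_true c F) Q = cm_answer c Q"
proof -
  have "count_true (paint_true c F) Q = card Q - count_true c Q"
    using count_true_paint_true[OF assms(1-3)] assms(4) by simp
  then show ?thesis
    using assms(1) count_true_le_card[OF assms(1), of c] by (simp add: cm_answer_eq_min min.commute)
qed

lemma cm_answer_swap:
  assumes "finite Q" "x \<in> Q" "y \<in> Q" "c x" "\<not> c y"
  shows "cm_answer (c(x := False, y := True)) Q = cm_answer c Q"
proof -
  have "{z\<in>Q. (c(x := False, y := True)) z} = insert y ({z\<in>Q. c z} - {x})"
    using assms(2-5) by auto
  moreover have "Suc (card ({z\<in>Q. c z} - {x})) = card {z\<in>Q. c z}"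
    using assms by (intro card_Suc_Diff1) auto
  ultimately have "count_true (c(x := False, y := True)) Q = count_true c Q"
    using assms unfolding count_true_def by simp
  then show ?thesis using assms(1) by (simp add: cm_answer_eq_min)
qed

lemma majority_ball_iff:
  "majority_ball n c i \<longleftrightarrow>
     i \<in> {1..n} \<and> (if c i then n < 2 * count_true c {1..n} else 2 * count_true c {1..n} < n)"
proof -
  have "{j\<in>{1..n}. c j = c i} = (if c i then {j\<in>{1..n}. c j} else {1..n} - {j\<in>{1..n}. c j})"
    by auto
  moreover have "card ({1..n} - {j\<in>{1..n}. c j}) = n - count_true c {1..n}"
    unfolding count_true_def by (subst card_Diff_subset) auto
  ultimately have "card {j\<in>{1..n}. c j = c i} =
      (if c i then count_true c {1..n} else n - count_true c {1..n})"
    by (simp add: count_true_def)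
  moreover have "count_true c {1..n} \<le> n"
    using count_true_le_card[of "{1..n}" c] by simp
  ultimately show ?thesis
    unfolding majority_ball_def by auto
qed

lemma ex_majority_ball:
  assumes "2 * count_true c {1..n} \<noteq> n"
  shows "\<exists>i. majority_ball n c i"
proof (cases "n < 2 * count_true c {1..n}")
  case True
  then have "{x\<in>{1..n}. c x} \<noteq> {}" by (metis card.empty count_true_def mult_0_right not_less0)
  then show ?thesis using True by (auto simp: majority_ball_iff)
next
  case False
  then have "{x\<in>{1..n}. c x} \<noteq> {1..n}" using assms by (auto simp: count_true_def)
  then show ?thesis using False assms by (auto simp: majority_ball_iff)
qed

lemma cm_consistent_refl: "cm_consistent Qs c c"
  by (simp add: cm_consistent_def)

lemma cm_consistentI:
  "(\<And>t. t < length Qs \<Longrightarrow> cm_answer c' (Qs ! t) = cm_answer c (Qs ! t)) \<Longrightarrow> cm_consistent Qs c c'"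
  unfolding cm_consistent_def by (metis in_set_conv_nth)

lemma cm_consistent_paint_true:
  assumes "\<And>x. x \<in> F \<Longrightarrow> \<not> c x"
    and "\<And>t. t < length Qs \<Longrightarrow> F \<inter> Qs ! t \<noteq> {} \<Longrightarrow>
           finite (Qs ! t) \<and> F \<subseteq> Qs ! t \<and> 2 * count_true c (Qs ! t) + card F = card (Qs ! t)"
  shows "cm_consistent Qs c (paint_true c F)"
proof (rule cm_consistentI)
  fix t assume t: "t < length Qs"
  show "cm_answer (paint_true c F) (Qs ! t) = cm_answer c (Qs ! t)"
  proof (cases "F \<inter> Qs ! t = {}")
    case True
    then show ?thesis by (intro cm_answer_cong) (auto simp: paint_true_def)
  next
    case False
    then show ?thesis using assms t by (intro cm_answer_paint_true_mirror) auto
  qed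
qed

lemma cm_successful_query:
  assumes "cm_successful k n Qs" "t < length Qs"
  shows "Qs ! t \<subseteq> {1..n}" "card (Qs ! t) = k" "finite (Qs ! t)"
proof -
  have "is_query k n (Qs ! t)"
    using assms unfolding cm_successful_def by (meson nth_mem)
  then show "Qs ! t \<subseteq> {1..n}" "card (Qs ! t) = k"
    unfolding is_query_def by auto
  then show "finite (Qs ! t)" using finite_subset by blast
qed

lemma cm_successful_consistent_balanced:
  assumes "cm_successful k n Qs" "2 * count_true c {1..n} = n" "cm_consistent Qs c c'"
  shows "2 * count_true c' {1..n} = n"
proof (rule ccontr)
  assume "2 * count_true c' {1..n} \<noteq> n"
  then obtain i where "majority_ball n c' i" using ex_majority_ball by blast
  moreover have "\<not> majority_ball n c j" for j
    using assms(2) by (simp add: majority_ball_iff)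
  ultimately show False
    using assms(1,3) cm_consistent_refl unfolding cm_successful_def by blast
qed

lemma cm_successful_no_covering_majorities:
  assumes "cm_successful k n Qs" "2 * count_true c {1..n} < n"
    and "\<And>c'. c' \<in> C \<Longrightarrow> cm_consistent Qs c c' \<and> n < 2 * count_true c' {1..n}"
    and "\<And>x. x \<in> {1..n} \<Longrightarrow> \<exists>c'\<in>C. c' x = c x"
  shows False
proof -
  \<comment> \<open>c has a majority, so success yields a ball that is a majority ball of every consistent
    coloring: it is False under c but would have to be True under some c' in C.\<close>
  obtain j where "majority_ball n c j"
    using ex_majority_ball assms(2) by (metis less_irrefl)
  then obtain i where i: "i \<in> {1..n}" "\<And>c'. cm_consistent Qs c c' \<Longrightarrow> majority_ball n c' i"
    using assms(1) cm_consistent_refl unfolding cm_successful_def by blast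
  then have "\<not> c i"
    using cm_consistent_refl assms(2) by (force simp: majority_ball_iff)
  moreover obtain c' where "c' \<in> C" "c' i = c i"
    using assms(4) i(1) by blast
  ultimately show False
    using i(2) assms(3) by (force simp: majority_ball_iff)
qed

section \<open>Query degrees\<close>

definition query_degree :: "nat set list \<Rightarrow> nat \<Rightarrow> nat" where
  "query_degree Qs i = card {t. t < length Qs \<and> i \<in> Qs ! t}"

lemma query_degree_eq_0_iff: "query_degree Qs i = 0 \<longleftrightarrow> (\<forall>t < length Qs. i \<notin> Qs ! t)"
  unfolding query_degree_def by auto

lemma query_degree_eq_1_unique:
  assumes "query_degree Qs i = 1" "t < length Qs" "i \<in> Qs ! t" "s < length Qs" "i \<in> Qs ! s"
  shows "s = t"
  using assms unfolding query_degree_def by (metis (mono_tags, lifting) card_1_singletonE mem_Collect_eq singletonD)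

lemma sum_query_degree:
  assumes "finite S"
  shows "(\<Sum>i\<in>S. query_degree Qs i) = (\<Sum>t<length Qs. card (Qs ! t \<inter> S))"
proof -
  have "(\<Sum>i\<in>S. query_degree Qs i) = (\<Sum>i\<in>S. \<Sum>t<length Qs. if i \<in> Qs ! t then 1 else 0)"
    unfolding query_degree_def by (simp add: card_filter_eq_sum[of "{..<length Qs}", simplified])
  also have "\<dots> = (\<Sum>t<length Qs. \<Sum>i\<in>S. if i \<in> Qs ! t then 1 else 0)"
    by (rule sum.swap)
  also have "\<dots> = (\<Sum>t<length Qs. card (Qs ! t \<inter> S))"
    using assms by (simp add: card_filter_eq_sum[symmetric] Int_def conj_commute)
  finally show ?thesis .
qed

lemma sum_query_degree_cm_successful:
  assumes "cm_successful k n Qs"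
  shows "(\<Sum>i\<in>{1..n}. query_degree Qs i) = length Qs * k"
proof -
  have "card (Qs ! t \<inter> {1..n}) = k" if "t < length Qs" for t
    using cm_successful_query[OF assms that] by (simp add: Int_absorb2)
  then show ?thesis by (simp add: sum_query_degree)
qed

lemma double_card_plus_high_le_sum_plus_low:
  fixes f :: "'a \<Rightarrow> nat"
  assumes "finite A"
  shows "2 * card A + card {x\<in>A. 3 \<le> f x}
           \<le> sum f A + 2 * card {x\<in>A. f x = 0} + card {x\<in>A. f x = 1}"
proof -
  have "(\<Sum>x\<in>A. 2) + (\<Sum>x\<in>A. if 3 \<le> f x then 1 else 0)
          \<le> sum f A + (\<Sum>x\<in>A. 2 * (if f x = 0 then 1 else 0)) + (\<Sum>x\<in>A. if f x = 1 then 1 else 0)"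
    unfolding sum.distrib[symmetric] by (rule sum_mono) auto
  then show ?thesis
    using assms by (simp add: card_filter_eq_sum sum_distrib_left)
qed

lemma sum_plus_zeros_le_card_plus_twos:
  fixes f :: "'a \<Rightarrow> nat"
  assumes "finite T" "\<And>t. t \<in> T \<Longrightarrow> f t \<le> 2"
  shows "sum f T + card {t\<in>T. f t = 0} \<le> card T + card {t\<in>T. 2 \<le> f t}"
proof -
  have "sum f T + (\<Sum>t\<in>T. if f t = 0 then 1 else 0)
          \<le> (\<Sum>t\<in>T. 1) + (\<Sum>t\<in>T. if 2 \<le> f t then 1 else 0)"
    unfolding sum.distrib[symmetric] by (rule sum_mono) (use assms(2) in fastforce)
  then show ?thesis
    using assms(1) by (simp add: card_filter_eq_sum)
qed

lemma cm_successful_degree_count: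
  assumes "cm_successful k n Qs"
  shows "2 * n + card {i\<in>{1..n}. 3 \<le> query_degree Qs i}
           \<le> length Qs * k + 2 * card {i\<in>{1..n}. query_degree Qs i = 0}
              + card {i\<in>{1..n}. query_degree Qs i = 1}"
  using double_card_plus_high_le_sum_plus_low[of "{1..n}" "query_degree Qs"]
    sum_query_degree_cm_successful[OF assms] by simp

definition private_balls :: "nat \<Rightarrow> nat set list \<Rightarrow> nat set" where
  "private_balls n Qs = {i\<in>{1..n}. query_degree Qs i = 1}"

lemma obtain_private_subset:
  assumes "m \<le> card (Qs ! t \<inter> private_balls n Qs)"
  obtains F where "F \<subseteq> Qs ! t" "card F = m" "\<And>x. x \<in> F \<Longrightarrow> query_degree Qs x = 1"
proof -
  obtain F where "F \<subseteq> Qs ! t \<inter> private_balls n Qs" "card F = m"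
    using obtain_subset_with_card_n[OF assms] by blast
  then show thesis
    using that unfolding private_balls_def by blast
qed

lemma card_private_set_bound:
  assumes "finite D" "\<And>i. i \<in> D \<Longrightarrow> query_degree Qs i = 1"
    and "\<And>t. t < length Qs \<Longrightarrow> card (Qs ! t \<inter> D) \<le> 2"
  shows "card D + card {t\<in>{..<length Qs}. card (Qs ! t \<inter> D) = 0}
           \<le> length Qs + card {t\<in>{..<length Qs}. 2 \<le> card (Qs ! t \<inter> D)}"
proof -
  have "card D = (\<Sum>t<length Qs. card (Qs ! t \<inter> D))"
    using sum_query_degree[OF assms(1), of Qs] assms(2) by simp
  then show ?thesis
    using sum_plus_zeros_le_card_plus_twos[of "{..<length Qs}" "\<lambda>t. card (Qs ! t \<inter> D)"] assms(3)
    by simp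
qed

section \<open>Colorings with prescribed counts\<close>

lemma half_coloring_extension:
  assumes "U \<subseteq> {1..n}" "card U \<le> n div 2"
  obtains c' where "\<And>x. x \<in> U \<Longrightarrow> c' x = c x" "count_true c' {1..n} = n div 2"
proof -
  have finU: "finite U" using assms(1) finite_subset by blast
  have "card ({1..n} - U) = n - card U"
    using assms(1) finU by (simp add: card_Diff_subset)
  then have "n div 2 - count_true c U \<le> card ({1..n} - U)"
    using assms(2) by linarith
  then obtain W where W: "W \<subseteq> {1..n} - U" "card W = n div 2 - count_true c U" "finite W"
    by (rule obtain_subset_with_card_n)
  define c' where "c' x = (if x \<in> U then c x else x \<in> W)" for x
  have "{x\<in>{1..n}. c' x} = {x\<in>U. c x} \<union> W" "{x\<in>U. c x} \<inter> W = {}"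
    using W(1) assms(1) unfolding c'_def by auto
  then have "count_true c' {1..n} = count_true c U + card W"
    unfolding count_true_def using finU W(3) by (simp add: card_Un_disjoint)
  moreover have "count_true c U \<le> n div 2"
    using count_true_le_card[OF finU, of c] assms(2) by linarith
  ultimately show thesis
    using that[of c'] W(2) unfolding c'_def by simp
qed

lemma exists_subset_card_inter_both:
  assumes "finite R" "finite R'" "card R = card R'" "h \<le> card R"
  obtains S where "S \<subseteq> R \<union> R'" "card (S \<inter> R) = h" "card (S \<inter> R') = h"
proof -
  define a where "a = min h (card (R \<inter> R'))"
  obtain SA where SA: "SA \<subseteq> R \<inter> R'" "card SA = a" "finite SA"
    using obtain_subset_with_card_n[of a "R \<inter> R'"] unfolding a_def by auto
  have "card (R - R') = card R - card (R \<inter> R')" "card (R' - R) = card R' - card (R \<inter> R')"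
    using assms(1,2) by (simp_all add: card_Diff_subset_Int Int_commute)
  moreover have "card (R \<inter> R') \<le> card R"
    using assms(1) by (simp add: card_mono)
  ultimately have "h - a \<le> card (R - R')" "h - a \<le> card (R' - R)"
    using assms(3,4) unfolding a_def by auto
  then obtain SB SC where SB: "SB \<subseteq> R - R'" "card SB = h - a" "finite SB"
    and SC: "SC \<subseteq> R' - R" "card SC = h - a" "finite SC"
    by (meson obtain_subset_with_card_n)
  have "S \<inter> R = SA \<union> SB" "S \<inter> R' = SA \<union> SC" "SA \<inter> SB = {}" "SA \<inter> SC = {}"
    if "S = SA \<union> SB \<union> SC" for S
    using that SA(1) SB(1) SC(1) by blast+
  moreover have "a \<le> h" unfolding a_def by simp
  ultimately show thesis
    using that[of "SA \<union> SB \<union> SC"] SA SB SC by (auto simp: card_Un_disjoint)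
qed

lemma half_coloring_with_query_counts:
  assumes "U \<subseteq> {1..n}" "card U \<le> n div 2" "Q \<union> Q' \<subseteq> U"
    and "F \<subseteq> Q" "F' \<subseteq> Q'" "F \<inter> Q' \<subseteq> F'" "F' \<inter> Q \<subseteq> F"
    and "card (Q - F) = card (Q' - F')" "h \<le> card (Q - F)"
  obtains c where "count_true c {1..n} = n div 2" "\<And>x. x \<in> U \<Longrightarrow> c x \<Longrightarrow> x \<in> (Q - F) \<union> (Q' - F')"
    "count_true c Q = h" "count_true c Q' = h"
proof -
  have fin: "finite Q" "finite Q'"
    using assms(1,3) by (meson finite_Un finite_atLeastAtMost finite_subset)+
  obtain S where S: "S \<subseteq> (Q - F) \<union> (Q' - F')" "card (S \<inter> (Q - F)) = h" "card (S \<inter> (Q' - F')) = h"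
    using exists_subset_card_inter_both[of "Q - F" "Q' - F'" h] fin assms(8,9) by blast
  obtain c where c: "\<And>x. x \<in> U \<Longrightarrow> c x = (x \<in> S)" "count_true c {1..n} = n div 2"
    using half_coloring_extension[OF assms(1,2), of "\<lambda>x. x \<in> S"] by blast
  have inS: "c x \<longleftrightarrow> x \<in> S" if "x \<in> Q \<union> Q'" for x
    using c(1) assms(3) that by blast
  have "{x\<in>Q. c x} = S \<inter> (Q - F)" "{x\<in>Q'. c x} = S \<inter> (Q' - F')"
    using inS S(1) assms(6,7) by blast+
  then have "count_true c Q = h" "count_true c Q' = h"
    unfolding count_true_def using S(2,3) by simp_all
  moreover have "\<And>x. x \<in> U \<Longrightarrow> c x \<Longrightarrow> x \<in> (Q - F) \<union> (Q' - F')"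
    using c(1) S(1) by blast
  ultimately show thesis
    using that c(2) by blast
qed

lemma half_coloring_with_query_count:
  assumes "U \<subseteq> {1..n}" "card U \<le> n div 2" "Q \<subseteq> U" "F \<subseteq> Q" "h \<le> card (Q - F)"
  obtains c where "count_true c {1..n} = n div 2" "\<And>x. x \<in> U \<Longrightarrow> c x \<Longrightarrow> x \<in> Q - F"
    "count_true c Q = h"
proof -
  obtain c where "count_true c {1..n} = n div 2" "\<And>x. x \<in> U \<Longrightarrow> c x \<Longrightarrow> x \<in> (Q - F) \<union> (Q - F)"
    "count_true c Q = h" "count_true c Q = h"
    by (rule half_coloring_with_query_counts[of U n Q Q F F h]) (use assms in auto)
  then show thesis
    using that by simp
qed

lemma cm_consistent_paint_unqueried:
  assumes "\<And>x. x \<in> F \<Longrightarrow> query_degree Qs x = 0"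
  shows "cm_consistent Qs c (paint_true c F)"
  by (rule cm_consistentI, rule cm_answer_cong)
    (use assms in \<open>auto simp: query_degree_eq_0_iff paint_true_def\<close>)

lemma cm_consistent_paint_private:
  assumes "t < length Qs" "finite (Qs ! t)" "F \<subseteq> Qs ! t"
    and "\<And>x. x \<in> F \<Longrightarrow> query_degree Qs x = 1" "\<And>x. x \<in> F \<Longrightarrow> \<not> c x"
    and "2 * count_true c (Qs ! t) + card F = card (Qs ! t)"
  shows "cm_consistent Qs c (paint_true c F)"
proof (rule cm_consistent_paint_true[OF assms(5)])
  fix s assume s: "s < length Qs" "F \<inter> Qs ! s \<noteq> {}"
  then obtain x where "x \<in> F" "x \<in> Qs ! s" by blast
  then have "s = t" using query_degree_eq_1_unique assms(1,3,4) s(1) by blast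
  then show "finite (Qs ! s) \<and> F \<subseteq> Qs ! s \<and> 2 * count_true c (Qs ! s) + card F = card (Qs ! s)"
    using assms by simp
qed

lemma painting_inconsistent_even_n:
  assumes "cm_successful k n Qs" "even n" "count_true c {1..n} = n div 2"
    and "F \<noteq> {}" "F \<subseteq> {1..n}" "\<And>x. x \<in> F \<Longrightarrow> \<not> c x"
  shows "\<not> cm_consistent Qs c (paint_true c F)"
proof
  assume "cm_consistent Qs c (paint_true c F)"
  moreover have "2 * count_true c {1..n} = n"
    using assms(2,3) by simp
  ultimately have "2 * count_true (paint_true c F) {1..n} = n"
    using cm_successful_consistent_balanced[OF assms(1)] by blast
  moreover have "card F \<noteq> 0"
    using assms(4,5) by (simp add: finite_subset)
  ultimately show False
    using count_true_paint_true[of "{1..n}" F c] assms(2,3,5,6) by simp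
qed

lemma paintings_meet_odd_n:
  assumes "cm_successful k n Qs" "odd n" "count_true c {1..n} = n div 2"
    and "\<And>F. F \<in> \<F> \<Longrightarrow> F \<noteq> {} \<and> F \<subseteq> {1..n} \<and> (\<forall>x\<in>F. \<not> c x) \<and> cm_consistent Qs c (paint_true c F)"
  shows "\<exists>x\<in>{1..n}. \<forall>F\<in>\<F>. x \<in> F"
proof (rule ccontr)
  assume no_common: "\<not> ?thesis"
  show False
  proof (rule cm_successful_no_covering_majorities[OF assms(1), of c "paint_true c ` \<F>"])
    show "2 * count_true c {1..n} < n"
      using assms(2,3) by presburger
  next
    fix c' assume "c' \<in> paint_true c ` \<F>"
    then obtain F where F: "F \<in> \<F>" "c' = paint_true c F" by blast
    then have "card F \<noteq> 0"
      using assms(4) by (meson card_eq_0_iff finite_atLeastAtMost finite_subset)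
    then show "cm_consistent Qs c c' \<and> n < 2 * count_true c' {1..n}"
      using F assms(2-4) count_true_paint_true[of "{1..n}" F c] by auto
  next
    fix x assume "x \<in> {1..n}"
    then obtain F where "F \<in> \<F>" "x \<notin> F"
      using no_common by blast
    then show "\<exists>c'\<in>paint_true c ` \<F>. c' x = c x"
      using paint_true_outside by blast
  qed
qed

lemma two_paintings_meet_odd_n:
  assumes "cm_successful k n Qs" "odd n" "count_true c {1..n} = n div 2"
    and "F \<noteq> {}" "F \<subseteq> {1..n}" "G \<noteq> {}" "G \<subseteq> {1..n}" "\<And>x. x \<in> F \<union> G \<Longrightarrow> \<not> c x"
    and "cm_consistent Qs c (paint_true c F)" "cm_consistent Qs c (paint_true c G)"
  shows "F \<inter> G \<noteq> {}"
proof -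
  have "\<exists>x\<in>{1..n}. \<forall>H\<in>{F, G}. x \<in> H"
  proof (rule paintings_meet_odd_n[OF assms(1-3)])
    fix H assume "H \<in> {F, G}"
    then show "H \<noteq> {} \<and> H \<subseteq> {1..n} \<and> (\<forall>x\<in>H. \<not> c x) \<and> cm_consistent Qs c (paint_true c H)"
      using assms(4-10) by auto
  qed
  then show ?thesis by auto
qed

section \<open>Even query size\<close>

lemma query_degree_pos_even_n:
  assumes "cm_successful k n Qs" "even n" "b \<in> {1..n}"
  shows "query_degree Qs b \<noteq> 0"
proof
  assume unqueried: "query_degree Qs b = 0"
  have "card {b} \<le> n div 2"
    using assms(2,3) by auto
  then obtain c where "\<not> c b" "count_true c {1..n} = n div 2"
    using half_coloring_extension[of "{b}" n "\<lambda>_. False"] assms(3) by auto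
  then show False
    using painting_inconsistent_even_n[OF assms(1,2), of c "{b}"]
      cm_consistent_paint_unqueried[of "{b}" Qs c] unqueried assms(3) by auto
qed

lemma private_pair_painting:
  assumes "cm_successful k n Qs" "even k" "t < length Qs" "F \<subseteq> Qs ! t" "card F = 2"
    and "\<And>x. x \<in> F \<Longrightarrow> query_degree Qs x = 1" "Qs ! t \<subseteq> U" "U \<subseteq> {1..n}" "card U \<le> n div 2"
  obtains c where "count_true c {1..n} = n div 2" "\<And>x. x \<in> U \<Longrightarrow> c x \<Longrightarrow> x \<in> Qs ! t - F"
    "cm_consistent Qs c (paint_true c F)"
proof -
  note Q = cm_successful_query[OF assms(1,3)]
  have "card (Qs ! t - F) = k - 2"
    using Q assms(4,5) by (simp add: card_Diff_subset finite_subset)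
  then have "(k - 2) div 2 \<le> card (Qs ! t - F)"
    by simp
  then obtain c where c: "count_true c {1..n} = n div 2"
    "\<And>x. x \<in> U \<Longrightarrow> c x \<Longrightarrow> x \<in> Qs ! t - F" "count_true c (Qs ! t) = (k - 2) div 2"
    using half_coloring_with_query_count[OF assms(8,9,7,4)] by blast
  have "2 \<le> k"
    using card_mono[OF Q(3) assms(4)] Q(2) assms(5) by simp
  then have "2 * count_true c (Qs ! t) + card F = card (Qs ! t)"
    using c(3) Q(2) assms(2,5) by simp
  moreover have "\<And>x. x \<in> F \<Longrightarrow> \<not> c x"
    using c(2) assms(4,7) by blast
  ultimately have "cm_consistent Qs c (paint_true c F)"
    using cm_consistent_paint_private[OF assms(3) Q(3) assms(4,6)] by blast
  then show thesis
    using that c(1,2) by blast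
qed

lemma no_private_pair_even_n:
  assumes "cm_successful k n Qs" "even n" "even k" "2 * k \<le> n"
    and "t < length Qs" "F \<subseteq> Qs ! t" "card F = 2" "\<And>x. x \<in> F \<Longrightarrow> query_degree Qs x = 1"
  shows False
proof -
  note Q = cm_successful_query[OF assms(1,5)]
  have "card (Qs ! t) \<le> n div 2"
    using Q(2) assms(4) by presburger
  then obtain c where c: "count_true c {1..n} = n div 2" "\<And>x. x \<in> Qs ! t \<Longrightarrow> c x \<Longrightarrow> x \<in> Qs ! t - F"
    "cm_consistent Qs c (paint_true c F)"
    using private_pair_painting[OF assms(1,3,5-8) subset_refl Q(1)] by blast
  have "F \<noteq> {}" "F \<subseteq> {1..n}" "\<And>x. x \<in> F \<Longrightarrow> \<not> c x"
    using assms(6,7) Q(1) c(2) by auto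
  then show False
    using painting_inconsistent_even_n[OF assms(1,2) c(1)] c(3) by blast
qed

lemma unqueried_unique_odd_n:
  assumes "cm_successful k n Qs" "odd n" "4 \<le> n"
    and "b \<in> {1..n}" "b' \<in> {1..n}" "query_degree Qs b = 0" "query_degree Qs b' = 0"
  shows "b = b'"
proof (rule ccontr)
  assume "b \<noteq> b'"
  have "card {b, b'} = 2"
    using \<open>b \<noteq> b'\<close> by simp
  moreover have "2 \<le> n div 2"
    using div_le_mono[OF assms(3), of 2] by simp
  ultimately have U: "{b, b'} \<subseteq> {1..n}" "card {b, b'} \<le> n div 2"
    using assms(4,5) by simp_all
  obtain c where "\<And>x. x \<in> {b, b'} \<Longrightarrow> c x = False" "count_true c {1..n} = n div 2"
    using half_coloring_extension[of "{b, b'}" n "\<lambda>_. False", OF U] by blast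
  then have c: "\<not> c b" "\<not> c b'" "count_true c {1..n} = n div 2"
    by auto
  have "{b} \<inter> {b'} \<noteq> {}"
  proof (rule two_paintings_meet_odd_n[OF assms(1,2) c(3)])
    show "cm_consistent Qs c (paint_true c {b})" "cm_consistent Qs c (paint_true c {b'})"
      using assms(6,7) by (auto intro: cm_consistent_paint_unqueried)
  qed (use assms(4,5) c in auto)
  then show False
    using \<open>b \<noteq> b'\<close> by auto
qed

lemma unqueried_excludes_private_pair_odd_n:
  assumes "cm_successful k n Qs" "odd n" "even k" "2 * k + 2 \<le> n"
    and "b \<in> {1..n}" "query_degree Qs b = 0"
    and "t < length Qs" "F \<subseteq> Qs ! t" "card F = 2" "\<And>x. x \<in> F \<Longrightarrow> query_degree Qs x = 1"
  shows False
proof -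
  note Q = cm_successful_query[OF assms(1,7)]
  have b_out: "b \<notin> Qs ! t"
    using assms(6,7) by (simp add: query_degree_eq_0_iff)
  have "card (insert b (Qs ! t)) \<le> n div 2"
    using Q(2,3) assms(2,4) b_out by simp
  moreover have "insert b (Qs ! t) \<subseteq> {1..n}"
    using Q(1) assms(5) by simp
  ultimately obtain c where c: "count_true c {1..n} = n div 2"
    "\<And>x. x \<in> insert b (Qs ! t) \<Longrightarrow> c x \<Longrightarrow> x \<in> Qs ! t - F" "cm_consistent Qs c (paint_true c F)"
    using private_pair_painting[OF assms(1,3,7-10), of "insert b (Qs ! t)"] by blast
  have "cm_consistent Qs c (paint_true c {b})"
    using assms(6) by (intro cm_consistent_paint_unqueried) auto
  moreover have "F \<noteq> {}" "F \<subseteq> {1..n}" "\<And>x. x \<in> {b} \<union> F \<Longrightarrow> \<not> c x"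
    using assms(8,9) Q(1) c(2) b_out by auto
  ultimately have "{b} \<inter> F \<noteq> {}"
    using two_paintings_meet_odd_n[OF assms(1,2) c(1) _ _ _ _ _ _ c(3)] assms(5) by blast
  then show False
    using assms(8) b_out by auto
qed

lemma no_private_triple_odd_n:
  assumes "cm_successful k n Qs" "odd n" "even k" "2 * k \<le> n"
    and "t < length Qs" "F \<subseteq> Qs ! t" "card F = 3" "\<And>x. x \<in> F \<Longrightarrow> query_degree Qs x = 1"
  shows False
proof -
  note Q = cm_successful_query[OF assms(1,5)]
  have "3 \<le> k"
    using card_mono[OF Q(3) assms(6)] Q(2) assms(7) by simp
  then have k4: "4 \<le> k"
    using assms(3) by presburger
  have card_rest: "card (Qs ! t - F) = k - 3"
    using Q assms(6,7) by (simp add: card_Diff_subset finite_subset)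
  have small: "card (Qs ! t) \<le> n div 2"
    using Q(2) assms(4) by presburger
  have "(k - 2) div 2 \<le> card (Qs ! t - F)"
    using card_rest k4 by simp
  then obtain c where c: "count_true c {1..n} = n div 2"
    "\<And>x. x \<in> Qs ! t \<Longrightarrow> c x \<Longrightarrow> x \<in> Qs ! t - F" "count_true c (Qs ! t) = (k - 2) div 2"
    using half_coloring_with_query_count[OF Q(1) small subset_refl assms(6)] by blast
  have "\<exists>y\<in>{1..n}. \<forall>G\<in>(\<lambda>x. F - {x}) ` F. y \<in> G"
  proof (rule paintings_meet_odd_n[OF assms(1,2) c(1)])
    fix G assume "G \<in> (\<lambda>x. F - {x}) ` F"
    then obtain x where x: "x \<in> F" "G = F - {x}" by blast
    then have G: "card G = 2" "G \<subseteq> Qs ! t" "\<And>y. y \<in> G \<Longrightarrow> \<not> c y"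
      using assms(6,7) c(2) finite_subset[OF assms(6) Q(3)] by (auto simp: card_Diff_singleton)
    moreover have "2 * count_true c (Qs ! t) + card G = card (Qs ! t)"
      using c(3) Q(2) assms(3) k4 G(1) by presburger
    moreover have "\<And>y. y \<in> G \<Longrightarrow> query_degree Qs y = 1"
      using assms(8) x(2) by blast
    ultimately have "cm_consistent Qs c (paint_true c G)"
      using cm_consistent_paint_private[OF assms(5) Q(3), of G c] by blast
    then show "G \<noteq> {} \<and> G \<subseteq> {1..n} \<and> (\<forall>y\<in>G. \<not> c y) \<and> cm_consistent Qs c (paint_true c G)"
      using G Q(1) by auto
  qed
  then obtain y where "\<forall>G\<in>(\<lambda>x. F - {x}) ` F. y \<in> G"
    by blast
  then have y: "y \<in> F - {x}" if "x \<in> F" for x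
    using that by simp
  obtain x where "x \<in> F"
    using assms(7) by fastforce
  then have "y \<in> F"
    using y by blast
  then show False
    using y by blast
qed

lemma private_pair_query_unique_odd_n:
  assumes "cm_successful k n Qs" "odd n" "even k" "4 * k \<le> n"
    and "t < length Qs" "F \<subseteq> Qs ! t" "card F = 2" "\<And>x. x \<in> F \<Longrightarrow> query_degree Qs x = 1"
    and "s < length Qs" "G \<subseteq> Qs ! s" "card G = 2" "\<And>x. x \<in> G \<Longrightarrow> query_degree Qs x = 1"
  shows "t = s"
proof (rule ccontr)
  assume "t \<noteq> s"
  note Q_t = cm_successful_query[OF assms(1,5)] and Q_s = cm_successful_query[OF assms(1,9)]
  have disjoint: "F \<inter> Qs ! s = {}" "G \<inter> Qs ! t = {}"
    using query_degree_eq_1_unique[of Qs _ t s] query_degree_eq_1_unique[of Qs _ s t]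
      assms(5,6,8,9,10,12) \<open>t \<noteq> s\<close> by (metis disjoint_iff subsetD)+
  have rest: "card (Qs ! t - F) = k - 2" "card (Qs ! s - G) = k - 2"
    using Q_t Q_s assms(6,7,10,11) by (simp_all add: card_Diff_subset finite_subset)
  have "card (Qs ! t \<union> Qs ! s) \<le> 2 * k"
    using card_Un_le[of "Qs ! t" "Qs ! s"] Q_t(2) Q_s(2) by simp
  then have small: "card (Qs ! t \<union> Qs ! s) \<le> n div 2"
    using assms(4) by presburger
  have "Qs ! t \<union> Qs ! s \<subseteq> {1..n}" "F \<inter> Qs ! s \<subseteq> G" "G \<inter> Qs ! t \<subseteq> F"
    "(k - 2) div 2 \<le> card (Qs ! t - F)"
    using Q_t(1) Q_s(1) disjoint rest by auto
  then obtain c where c: "count_true c {1..n} = n div 2"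
    "\<And>x. x \<in> Qs ! t \<union> Qs ! s \<Longrightarrow> c x \<Longrightarrow> x \<in> (Qs ! t - F) \<union> (Qs ! s - G)"
    "count_true c (Qs ! t) = (k - 2) div 2" "count_true c (Qs ! s) = (k - 2) div 2"
    using half_coloring_with_query_counts[OF _ small subset_refl assms(6,10) _ _ rest(1)[folded rest(2)]]
    by blast
  have false: "\<And>x. x \<in> F \<union> G \<Longrightarrow> \<not> c x"
    using c(2) assms(6,10) disjoint by blast
  have "2 \<le> k"
    using card_mono[OF Q_t(3) assms(6)] Q_t(2) assms(7) by simp
  then have bal: "2 * count_true c (Qs ! t) + card F = card (Qs ! t)"
    "2 * count_true c (Qs ! s) + card G = card (Qs ! s)"
    using c(3,4) Q_t(2) Q_s(2) assms(3,7,11) by simp_all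
  have consistent: "cm_consistent Qs c (paint_true c F)" "cm_consistent Qs c (paint_true c G)"
    using cm_consistent_paint_private[OF assms(5) Q_t(3) assms(6,8) _ bal(1)]
      cm_consistent_paint_private[OF assms(9) Q_s(3) assms(10,12) _ bal(2)] false by blast+
  have nonempty: "F \<noteq> {}" "G \<noteq> {}" and balls: "F \<subseteq> {1..n}" "G \<subseteq> {1..n}"
    using assms(6,7,10,11) Q_t(1) Q_s(1) by auto
  have "F \<inter> G \<noteq> {}"
    by (rule two_paintings_meet_odd_n[OF assms(1,2) c(1) nonempty(1) balls(1)
          nonempty(2) balls(2) false consistent])
  then show False
    using assms(10) disjoint(1) by blast
qed

lemma cm_consistent_shift_to_private_pair:
  assumes "\<And>t. t < length Qs \<Longrightarrow> finite (Qs ! t)"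
    and "{t. t < length Qs \<and> x \<in> Qs ! t} = {t1, t2}" "t1 \<noteq> t2"
    and "i \<in> Qs ! t1" "query_degree Qs i = 1" "j \<in> Qs ! t2" "query_degree Qs j = 1"
    and "c x" "\<not> c i" "\<not> c j"
  shows "cm_consistent Qs c (c(x := False, i := True, j := True))" (is "cm_consistent Qs c ?d")
proof (rule cm_consistentI)
  have t: "t1 < length Qs" "t2 < length Qs" "x \<in> Qs ! t1" "x \<in> Qs ! t2"
    using assms(2) by blast+
  have out: "j \<notin> Qs ! t1" "i \<notin> Qs ! t2"
    using query_degree_eq_1_unique[OF assms(7) t(2) assms(6) t(1)]
      query_degree_eq_1_unique[OF assms(5) t(1) assms(4) t(2)] assms(3) by auto
  have distinct: "x \<noteq> i" "x \<noteq> j"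
    using assms(8-10) by auto
  fix s assume s: "s < length Qs"
  consider "s = t1" | "s = t2" | "x \<notin> Qs ! s" "i \<notin> Qs ! s" "j \<notin> Qs ! s"
    using assms(2) s query_degree_eq_1_unique[OF assms(5) t(1) assms(4) s]
      query_degree_eq_1_unique[OF assms(7) t(2) assms(6) s] by blast
  then show "cm_answer ?d (Qs ! s) = cm_answer c (Qs ! s)"
  proof cases
    case 1
    have "cm_answer ?d (Qs ! s) = cm_answer (c(x := False, i := True)) (Qs ! s)"
      using out(1) distinct 1 by (intro cm_answer_cong) auto
    also have "\<dots> = cm_answer c (Qs ! s)"
      using assms(1)[OF s] t(3) assms(4,8,9) 1 by (intro cm_answer_swap) auto
    finally show ?thesis .
  next
    case 2
    have "cm_answer ?d (Qs ! s) = cm_answer (c(x := False, j := True)) (Qs ! s)"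
      using out(2) distinct 2 by (intro cm_answer_cong) auto
    also have "\<dots> = cm_answer c (Qs ! s)"
      using assms(1)[OF s] t(4) assms(6,8,10) 2 by (intro cm_answer_swap) auto
    finally show ?thesis .
  next
    case 3
    then show ?thesis
      by (intro cm_answer_cong) auto
  qed
qed

lemma unqueried_excludes_degree_two_odd_n:
  assumes "cm_successful k n Qs" "odd n" "8 \<le> n"
    and "b \<in> {1..n}" "query_degree Qs b = 0"
    and "\<And>t. t < length Qs \<Longrightarrow> \<exists>i\<in>Qs ! t. query_degree Qs i = 1"
  shows "query_degree Qs x \<noteq> 2"
proof
  assume "query_degree Qs x = 2"
  then obtain t1 t2 where tt: "{t. t < length Qs \<and> x \<in> Qs ! t} = {t1, t2}" "t1 \<noteq> t2"
    unfolding query_degree_def by (meson card_2_iff)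
  then have t: "t1 < length Qs" "t2 < length Qs" "x \<in> Qs ! t1" "x \<in> Qs ! t2"
    by blast+
  obtain i j where i: "i \<in> Qs ! t1" "query_degree Qs i = 1" and j: "j \<in> Qs ! t2" "query_degree Qs j = 1"
    using assms(6) t(1,2) by blast
  have "j \<notin> Qs ! t1"
    using query_degree_eq_1_unique[OF j(2) t(2) j(1) t(1)] tt(2) by auto
  then have distinct: "i \<noteq> j" "x \<noteq> i" "x \<noteq> j"
    using i(1,2) j(2) \<open>query_degree Qs x = 2\<close> by auto
  have b_new: "b \<noteq> i" "b \<noteq> j" "b \<noteq> x"
    using assms(5) i(2) j(2) \<open>query_degree Qs x = 2\<close> by auto
  have balls: "i \<in> {1..n}" "j \<in> {1..n}" "x \<in> {1..n}"
    using cm_successful_query(1)[OF assms(1) t(1)] cm_successful_query(1)[OF assms(1) t(2)] i(1) j(1) t(3)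
    by auto
  have "card {b, i, j, x} = 4"
    using distinct b_new by simp
  moreover have "4 \<le> n div 2"
    using assms(2,3) by presburger
  ultimately have U: "{b, i, j, x} \<subseteq> {1..n}" "card {b, i, j, x} \<le> n div 2"
    using assms(4) balls by simp_all
  obtain c where "\<And>y. y \<in> {b, i, j, x} \<Longrightarrow> c y = (y = x)" "count_true c {1..n} = n div 2"
    using half_coloring_extension[of "{b, i, j, x}" n "\<lambda>y. y = x", OF U] by blast
  then have c: "\<not> c b" "\<not> c i" "\<not> c j" "c x" "count_true c {1..n} = n div 2"
    using distinct b_new by auto
  define d where "d = c(x := False, i := True, j := True)"
  have consistent_d: "cm_consistent Qs c d"
    unfolding d_def using cm_successful_query(3)[OF assms(1)]
    by (rule cm_consistent_shift_to_private_pair[OF _ tt i j c(4,2,3)])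
  have "{y\<in>{1..n}. d y} = insert i (insert j ({y\<in>{1..n}. c y} - {x}))"
    using balls distinct unfolding d_def by auto
  moreover have "Suc (card ({y\<in>{1..n}. c y} - {x})) = card {y\<in>{1..n}. c y}"
    using balls(3) c(4) by (intro card_Suc_Diff1) auto
  ultimately have count_d: "count_true d {1..n} = Suc (count_true c {1..n})"
    using distinct c(2,3) unfolding count_true_def by simp
  have count_b: "count_true (paint_true c {b}) {1..n} = Suc (count_true c {1..n})"
    using count_true_paint_true[of "{1..n}" "{b}" c] assms(4) c(1) by simp
  show False
  proof (rule cm_successful_no_covering_majorities[OF assms(1), of c "{paint_true c {b}, d}"])
    show "2 * count_true c {1..n} < n"
      using assms(2) c(5) by presburger
  next
    fix c' assume "c' \<in> {paint_true c {b}, d}"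
    moreover have "cm_consistent Qs c (paint_true c {b})"
      using assms(5) by (intro cm_consistent_paint_unqueried) auto
    ultimately show "cm_consistent Qs c c' \<and> n < 2 * count_true c' {1..n}"
      using consistent_d count_d count_b c(5) assms(2) by auto
  next
    fix y
    show "\<exists>c'\<in>{paint_true c {b}, d}. c' y = c y"
      using b_new unfolding d_def by (cases "y = b") auto
  qed
qed

lemma length_bound_even_k_even_n:
  assumes "cm_successful k n Qs" "even k" "even n" "2 * k \<le> n"
  shows "2 * n \<le> length Qs * (k + 1)"
proof -
  let ?D1 = "private_balls n Qs"
  have "{i\<in>{1..n}. query_degree Qs i = 0} = {}"
    using query_degree_pos_even_n[OF assms(1,3)] by blast
  then have "card {i\<in>{1..n}. query_degree Qs i = 0} = 0"
    by (simp only: card.empty)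
  then have count: "2 * n \<le> length Qs * k + card ?D1"
    using cm_successful_degree_count[OF assms(1)] unfolding private_balls_def by linarith
  have at_most_one: "card (Qs ! t \<inter> ?D1) \<le> 1" if t: "t < length Qs" for t
  proof (rule ccontr)
    assume "\<not> card (Qs ! t \<inter> ?D1) \<le> 1"
    then have "2 \<le> card (Qs ! t \<inter> ?D1)"
      by simp
    then obtain F where "F \<subseteq> Qs ! t" "card F = 2" "\<And>x. x \<in> F \<Longrightarrow> query_degree Qs x = 1"
      by (metis obtain_private_subset)
    then show False
      using no_private_pair_even_n[OF assms(1,3,2,4) t] by blast
  qed
  have bound: "card ?D1 + card {t\<in>{..<length Qs}. card (Qs ! t \<inter> ?D1) = 0}
      \<le> length Qs + card {t\<in>{..<length Qs}. 2 \<le> card (Qs ! t \<inter> ?D1)}"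
  proof (rule card_private_set_bound)
    show "finite ?D1" "\<And>i. i \<in> ?D1 \<Longrightarrow> query_degree Qs i = 1"
      unfolding private_balls_def by auto
    show "card (Qs ! t \<inter> ?D1) \<le> 2" if "t < length Qs" for t
      using at_most_one[OF that] by simp
  qed
  have no_pairs: "{t\<in>{..<length Qs}. 2 \<le> card (Qs ! t \<inter> ?D1)} = {}"
  proof (rule equals0I)
    fix t assume "t \<in> {t\<in>{..<length Qs}. 2 \<le> card (Qs ! t \<inter> ?D1)}"
    then show False
      using at_most_one[of t] by simp
  qed
  have "card ?D1 \<le> length Qs"
    using bound unfolding no_pairs card.empty by linarith
  then show ?thesis
    using count by simp
qed

lemma card_private_balls_odd_n:
  assumes "cm_successful k n Qs" "even k" "odd n" "4 * k \<le> n" "2 \<le> k"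
  shows "card (private_balls n Qs) + card {t\<in>{..<length Qs}. card (Qs ! t \<inter> private_balls n Qs) = 0}
           \<le> length Qs + (if \<exists>b\<in>{1..n}. query_degree Qs b = 0 then 0 else 1)"
    (is "card ?D1 + _ \<le> _")
proof -
  define P where "P = {t\<in>{..<length Qs}. 2 \<le> card (Qs ! t \<inter> ?D1)}"
  have k2n: "2 * k \<le> n" and k2n2: "2 * k + 2 \<le> n"
    using assms(4,5) by linarith+
  have "card (Qs ! t \<inter> ?D1) \<le> 2" if "t < length Qs" for t
  proof (rule ccontr)
    assume "\<not> card (Qs ! t \<inter> ?D1) \<le> 2"
    then obtain F where "F \<subseteq> Qs ! t" "card F = 3" "\<And>x. x \<in> F \<Longrightarrow> query_degree Qs x = 1"
      by (metis obtain_private_subset not_less_eq_eq numeral_3_eq_3 numeral_2_eq_2)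
    then show False
      using no_private_triple_odd_n[OF assms(1,3,2) k2n that] by blast
  qed
  then have bound: "card ?D1 + card {t\<in>{..<length Qs}. card (Qs ! t \<inter> ?D1) = 0} \<le> length Qs + card P"
    unfolding P_def by (intro card_private_set_bound) (auto simp: private_balls_def)
  have P: "t < length Qs" "2 \<le> card (Qs ! t \<inter> ?D1)" if "t \<in> P" for t
    using that unfolding P_def by auto
  have "t = s" if ts: "t \<in> P" "s \<in> P" for t s
  proof -
    obtain F where F: "F \<subseteq> Qs ! t" "card F = 2" "\<And>x. x \<in> F \<Longrightarrow> query_degree Qs x = 1"
      using obtain_private_subset[OF P(2)[OF ts(1)]] by blast
    obtain G where G: "G \<subseteq> Qs ! s" "card G = 2" "\<And>x. x \<in> G \<Longrightarrow> query_degree Qs x = 1"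
      using obtain_private_subset[OF P(2)[OF ts(2)]] by blast
    show ?thesis
      by (rule private_pair_query_unique_odd_n[OF assms(1,3,2,4) P(1)[OF ts(1)] F P(1)[OF ts(2)] G])
  qed
  then have P_le: "card P \<le> 1"
    using card_le_Suc0_iff_eq[of P] unfolding P_def by simp
  show ?thesis
  proof (cases "\<exists>b\<in>{1..n}. query_degree Qs b = 0")
    case True
    then obtain b where b: "b \<in> {1..n}" "query_degree Qs b = 0"
      by blast
    have "P = {}"
    proof (rule equals0I)
      fix t assume t: "t \<in> P"
      obtain F where "F \<subseteq> Qs ! t" "card F = 2" "\<And>x. x \<in> F \<Longrightarrow> query_degree Qs x = 1"
        using obtain_private_subset[OF P(2)[OF t]] by blast
      then show False
        using unqueried_excludes_private_pair_odd_n[OF assms(1,3,2) k2n2 b P(1)[OF t]] by blast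
    qed
    moreover have "(if \<exists>b\<in>{1..n}. query_degree Qs b = 0 then 0 else 1) = (0::nat)"
      using True by simp
    ultimately show ?thesis
      using bound by simp
  next
    case False
    then have "(if \<exists>b\<in>{1..n}. query_degree Qs b = 0 then 0 else 1) = (1::nat)"
      by simp
    then show ?thesis
      using bound P_le by linarith
  qed
qed

lemma low_degree_balls_bound_even_k_odd_n:
  assumes "cm_successful k n Qs" "even k" "odd n" "4 * k \<le> n" "2 \<le> k" "length Qs + 2 \<le> n"
  shows "2 * card {i\<in>{1..n}. query_degree Qs i = 0} + card (private_balls n Qs)
           \<le> length Qs + 1 + card {i\<in>{1..n}. 3 \<le> query_degree Qs i}"
    (is "2 * card ?D0 + card ?D1 \<le> _ + card ?D3")
proof -
  define Z where "Z = {t\<in>{..<length Qs}. card (Qs ! t \<inter> ?D1) = 0}"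
  have n8: "8 \<le> n"
    using assms(4,5) by linarith
  note bound = card_private_balls_odd_n[OF assms(1-5), folded Z_def]
  have "\<forall>b\<in>?D0. \<forall>b'\<in>?D0. b = b'"
    using unqueried_unique_odd_n[OF assms(1,3)] n8 by auto
  then have D0_le: "card ?D0 \<le> 1"
    using card_le_Suc0_iff_eq[of ?D0] by simp
  show ?thesis
  proof (cases "?D0 = {}")
    case True
    then have "\<not> (\<exists>b\<in>{1..n}. query_degree Qs b = 0)"
      by blast
    then have "card ?D1 + card Z \<le> length Qs + 1"
      using bound by (simp only: if_False)
    moreover have "card ?D0 = 0"
      using True by (simp only: card.empty)
    ultimately show ?thesis
      by linarith
  next
    case False
    then obtain b where b: "b \<in> {1..n}" "query_degree Qs b = 0"
      by blast
    then have "\<exists>b\<in>{1..n}. query_degree Qs b = 0"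
      by blast
    then have D1_le: "card ?D1 + card Z \<le> length Qs"
      using bound by (simp only: if_True add_0_right)
    show ?thesis
    proof (cases "Z = {}")
      case False
      then have "1 \<le> card Z"
        unfolding Z_def by (simp add: Suc_le_eq card_gt_0_iff)
      then show ?thesis
        using D1_le D0_le by linarith
    next
      case True
      have every_query_private: "\<exists>i\<in>Qs ! t. query_degree Qs i = 1" if "t < length Qs" for t
        using True that unfolding Z_def private_balls_def by auto
      have "card (?D0 \<union> ?D1) < card {1..n}"
        using card_Un_le[of ?D0 ?D1] D0_le D1_le assms(6) by simp
      then have "\<not> {1..n} \<subseteq> ?D0 \<union> ?D1"
        using card_mono[of "?D0 \<union> ?D1" "{1..n}"] by (auto simp: private_balls_def)
      then obtain x where "x \<in> {1..n}" "x \<notin> ?D0 \<union> ?D1"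
        by blast
      then have "x \<in> ?D3"
        using unqueried_excludes_degree_two_odd_n[OF assms(1,3) n8 b every_query_private, of x]
        unfolding private_balls_def by auto
      then have "1 \<le> card ?D3"
        using card_mono[of ?D3 "{x}"] by simp
      then show ?thesis
        using D1_le D0_le by linarith
    qed
  qed
qed

lemma length_bound_even_k_odd_n:
  assumes "cm_successful k n Qs" "even k" "odd n" "4 * k \<le> n" "2 \<le> k"
  shows "2 * n \<le> length Qs * (k + 1) + 1"
proof (cases "length Qs + 2 \<le> n")
  case True
  then show ?thesis
    using cm_successful_degree_count[OF assms(1)] low_degree_balls_bound_even_k_odd_n[OF assms True]
    unfolding private_balls_def by simp
next
  case False
  have "length Qs * 3 \<le> length Qs * (k + 1)"
    using assms(5) by simp
  then show ?thesis
    using False assms(4,5) by linarith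
qed

section \<open>Property C\<close>

lemma balanced_on_even_card:
  assumes "finite e" "balanced_on c e" "card e = 2 * m"
  shows "count_true c e = m"
proof -
  have "card {x\<in>e. \<not> c x} = card e - count_true c e"
    using assms(1) unfolding count_true_def by (subst card_Diff_subset[symmetric]) (auto intro: arg_cong[where f = card])
  then show ?thesis
    using assms(2,3) count_true_le_card[OF assms(1), of c] unfolding balanced_on_def count_true_def
    by linarith
qed

lemma balanced_on_Not: "balanced_on (\<lambda>x. \<not> c x) e \<longleftrightarrow> balanced_on c e"
  unfolding balanced_on_def by auto

lemma balanced_on_image:
  assumes "inj_on f A"
  shows "balanced_on c (f ` A) \<longleftrightarrow> balanced_on (\<lambda>x. c (f x)) A"
proof -
  have "{x\<in>f ` A. c x} = f ` {x\<in>A. c (f x)}" "{x\<in>f ` A. \<not> c x} = f ` {x\<in>A. \<not> c (f x)}"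
    by auto
  moreover have "inj_on f {x\<in>A. c (f x)}" "inj_on f {x\<in>A. \<not> c (f x)}"
    using assms by (auto intro: inj_on_subset)
  ultimately show ?thesis
    unfolding balanced_on_def by (simp add: card_image)
qed

lemma d_C_le_card:
  assumes "\<forall>e\<in>E. e \<subseteq> {1..N} \<and> card e = m" "\<not> property_C N E"
  shows "d_C m N \<le> card E"
  unfolding d_C_def Inf_nat_def using assms by (intro Least_le) blast

lemma property_C_if_card_less_d_C:
  assumes "finite V" "card V \<le> N" "\<forall>e\<in>E. e \<subseteq> V \<and> card e = m" "card E < d_C m N"
  obtains c where "\<And>e. e \<in> E \<Longrightarrow> balanced_on c e"
proof -
  obtain f where f: "bij_betw f V {1..card V}"
    using finite_same_card_bij[OF assms(1), of "{1..card V}"] by auto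
  then have inj: "inj_on f e" if "e \<subseteq> V" for e
    using that bij_betw_imp_inj_on inj_on_subset by blast
  have into: "f ` e \<subseteq> {1..N}" if "e \<subseteq> V" for e
  proof -
    have "f ` e \<subseteq> f ` V"
      using that by (rule image_mono)
    also have "\<dots> = {1..card V}"
      using f by (simp add: bij_betw_def)
    also have "\<dots> \<subseteq> {1..N}"
      using assms(2) by simp
    finally show ?thesis .
  qed
  define E' where "E' = image f ` E"
  have "\<forall>e'\<in>E'. e' \<subseteq> {1..N} \<and> card e' = m"
    unfolding E'_def using assms(3) inj into by (auto simp: card_image)
  moreover have "finite E"
    using assms(1,3) by (meson Pow_iff finite_Pow_iff rev_finite_subset subsetI)
  then have "card E' < d_C m N"
    unfolding E'_def using card_image_le assms(4) le_less_trans by blast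
  ultimately have "property_C N E'"
    using d_C_le_card by (meson not_le)
  then obtain c' where "\<And>e'. e' \<in> E' \<Longrightarrow> balanced_on c' e'"
    unfolding property_C_def by blast
  then have "balanced_on (\<lambda>x. c' (f x)) e" if "e \<in> E" for e
    using that balanced_on_image[OF inj] assms(3) unfolding E'_def by blast
  then show thesis
    using that by blast
qed

lemma half_coloring_if_card_less_d_C:
  assumes "finite V" "card V \<le> N" "\<forall>e\<in>E. e \<subseteq> V \<and> card e = 2 * m" "card E < d_C (2 * m) N"
  obtains c where "\<not> c v" "\<And>e. e \<in> E \<Longrightarrow> count_true c e = m"
proof -
  obtain c where c: "\<And>e. e \<in> E \<Longrightarrow> balanced_on c e"
    using property_C_if_card_less_d_C[OF assms] by blast
  define c' where "c' = (if c v then (\<lambda>x. \<not> c x) else c)"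
  have "balanced_on c' e" if "e \<in> E" for e
    using c[OF that] balanced_on_Not unfolding c'_def by simp
  then have "count_true c' e = m" if "e \<in> E" for e
    using balanced_on_even_card assms(1,3) that finite_subset by meson
  moreover have "\<not> c' v"
    unfolding c'_def by simp
  ultimately show thesis
    using that by blast
qed

lemma d_C_le_odd:
  assumes "odd k" "3 \<le> k" "k \<le> N"
  shows "d_C (k - 1) N \<le> k"
proof -
  define E where "E = (\<lambda>v. {1..k} - {v}) ` {1..k}"
  obtain m where m: "k - 1 = 2 * m"
    using assms(1) by (metis odd_two_times_div_two_nat)
  have edges: "\<forall>e\<in>E. e \<subseteq> {1..N} \<and> card e = k - 1"
    unfolding E_def using assms(3) by auto
  have "\<not> property_C N E"
  proof
    assume "property_C N E"
    then obtain c where c: "\<And>e. e \<in> E \<Longrightarrow> balanced_on c e"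
      unfolding property_C_def by blast
    have count: "count_true c {1..k} = m + (if c v then 1 else 0)" if v: "v \<in> {1..k}" for v
    proof -
      have "{1..k} - {v} \<in> E"
        using v unfolding E_def by blast
      then have "count_true c ({1..k} - {v}) = m"
        using balanced_on_even_card[OF _ c] v m by simp
      then show ?thesis
        using count_true_remove[of "{1..k}" v c] v by simp
    qed
    have one: "1 \<in> {1..k}"
      using assms(2) by simp
    then have "c v = c 1" if "v \<in> {1..k}" for v
      using count[OF that] count[OF one] by (cases "c v"; cases "c 1"; simp)
    then have "{x\<in>{1..k}. c x} = (if c 1 then {1..k} else {})"
      by auto
    then show False
      using count[OF one] m assms(2) unfolding count_true_def by (cases "c 1") simp_all
  qed
  then have "d_C (k - 1) N \<le> card E"
    using d_C_le_card[OF edges] by blast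
  also have "\<dots> \<le> k"
    unfolding E_def using card_image_le[of "{1..k}"] by simp
  finally show ?thesis .
qed

section \<open>Odd query size\<close>

lemma truncated_queries_coloring_odd_k:
  assumes "cm_successful k n Qs" "odd k" "i \<in> {1..n}" "i' \<in> {1..n}"
    and "card {t. t < length Qs \<and> (i \<in> Qs ! t \<or> i' \<in> Qs ! t)} < d_C (k - 1) (n - 1)"
  obtains c where "\<not> c i"
    "\<And>t. t < length Qs \<Longrightarrow> i \<in> Qs ! t \<or> i' \<in> Qs ! t \<Longrightarrow> 2 * count_true c (Qs ! t - {i, i'}) + 1 = k"
proof -
  define M where "M = {t. t < length Qs \<and> (i \<in> Qs ! t \<or> i' \<in> Qs ! t)}"
  \<comment> \<open>Dropping i' (or i if i' is absent) turns the queries meeting {i, i'} into (k-1)-sets avoiding i'.\<close>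
  define e where "e t = Qs ! t - {if i' \<in> Qs ! t then i' else i}" for t
  obtain m where m: "k - 1 = 2 * m"
    using assms(2) by (metis odd_two_times_div_two_nat)
  have e: "e t \<subseteq> {1..n} - {i'}" "card (e t) = 2 * m" if "t \<in> M" for t
  proof -
    have "t < length Qs" "i \<in> Qs ! t \<or> i' \<in> Qs ! t"
      using that unfolding M_def by auto
    with cm_successful_query[OF assms(1)] show "e t \<subseteq> {1..n} - {i'}" "card (e t) = 2 * m"
      unfolding e_def using m by auto
  qed
  have "card (e ` M) < d_C (2 * m) (n - 1)"
    using card_image_le[of M e] assms(5) m unfolding M_def by simp
  moreover have "\<forall>e'\<in>e ` M. e' \<subseteq> {1..n} - {i'} \<and> card e' = 2 * m"
    using e by blast
  moreover have "card ({1..n} - {i'}) \<le> n - 1"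
    using assms(4) by simp
  ultimately obtain c where c: "\<not> c i" "\<And>e'. e' \<in> e ` M \<Longrightarrow> count_true c e' = m"
    using half_coloring_if_card_less_d_C[of "{1..n} - {i'}" "n - 1" "e ` M" m] by blast
  have "2 * count_true c (Qs ! t - {i, i'}) + 1 = k" if "t < length Qs" "i \<in> Qs ! t \<or> i' \<in> Qs ! t" for t
  proof -
    have t: "t \<in> M"
      using that unfolding M_def by simp
    have "{x\<in>Qs ! t - {i, i'}. c x} = {x\<in>e t. c x}"
      using c(1) e(1)[OF t] unfolding e_def by auto
    then show ?thesis
      using c(2)[OF imageI[OF t]] m odd_pos[OF assms(2)] unfolding count_true_def by simp
  qed
  then show thesis
    using that c(1) by blast
qed

lemma near_balanced_coloring_odd_k:
  assumes "cm_successful k n Qs" "odd k" "3 \<le> k" "2 * k * k \<le> n" "i \<in> {1..n}" "i' \<in> {1..n}"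
    and "card {t. t < length Qs \<and> (i \<in> Qs ! t \<or> i' \<in> Qs ! t)} < d_C (k - 1) (n - 1)"
  obtains c where "count_true c {1..n} = n div 2" "\<not> c i" "\<not> c i'"
    "\<And>t. t < length Qs \<Longrightarrow> i \<in> Qs ! t \<or> i' \<in> Qs ! t \<Longrightarrow> 2 * count_true c (Qs ! t) + 1 = k"
proof -
  define M where "M = {t. t < length Qs \<and> (i \<in> Qs ! t \<or> i' \<in> Qs ! t)}"
  have Q: "Qs ! t \<subseteq> {1..n}" "card (Qs ! t) = k" if "t \<in> M" for t
    using cm_successful_query[OF assms(1)] that unfolding M_def by auto
  obtain c' where c': "\<And>t. t < length Qs \<Longrightarrow> i \<in> Qs ! t \<or> i' \<in> Qs ! t \<Longrightarrow>
      2 * count_true c' (Qs ! t - {i, i'}) + 1 = k"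
    using truncated_queries_coloring_odd_k[OF assms(1,2,5,6,7)] by blast
  have "k \<le> k * k" "2 * k * k = k * k + k * k"
    by (simp_all add: le_square)
  then have "k \<le> n - 1"
    using assms(3,4) by linarith
  then have "card M < k"
    using assms(7) d_C_le_odd[OF assms(2,3) \<open>k \<le> n - 1\<close>] unfolding M_def by linarith
  define U where "U = (\<Union>t\<in>M. Qs ! t) \<union> {i, i'}"
  have "card (\<Union>t\<in>M. Qs ! t) \<le> (\<Sum>t\<in>M. card (Qs ! t))"
    by (rule card_UN_le) (simp add: M_def)
  also have "\<dots> = card M * k"
    using Q(2) by simp
  also have "\<dots> \<le> (k - 1) * k"
    using \<open>card M < k\<close> by simp
  finally have "card (\<Union>t\<in>M. Qs ! t) \<le> (k - 1) * k" .
  moreover have "card {i, i'} \<le> 2"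
    by (simp add: card_insert_if)
  ultimately have "card U \<le> (k - 1) * k + 2"
    unfolding U_def using card_Un_le[of "\<Union>t\<in>M. Qs ! t" "{i, i'}"] by linarith
  also have "\<dots> \<le> k * k"
    using assms(3) by (cases k) auto
  also have "\<dots> \<le> n div 2"
    using assms(4) by simp
  finally have U_card: "card U \<le> n div 2" .
  have U_sub: "U \<subseteq> {1..n}"
    unfolding U_def using Q(1) assms(5,6) by blast
  obtain c where c: "\<And>x. x \<in> U \<Longrightarrow> c x = (x \<notin> {i, i'} \<and> c' x)" "count_true c {1..n} = n div 2"
    using half_coloring_extension[OF U_sub U_card, of "\<lambda>x. x \<notin> {i, i'} \<and> c' x"] by blast
  have "2 * count_true c (Qs ! t) + 1 = k" if "t < length Qs" "i \<in> Qs ! t \<or> i' \<in> Qs ! t" for t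
  proof -
    have t: "t \<in> M"
      using that unfolding M_def by simp
    then have "{x\<in>Qs ! t. c x} = {x\<in>Qs ! t - {i, i'}. c' x}"
      using c(1) unfolding U_def by auto
    then show ?thesis
      using c'[OF that] unfolding count_true_def by simp
  qed
  moreover have "\<not> c i" "\<not> c i'"
    using c(1) unfolding U_def by auto
  ultimately show thesis
    using that c(2) by blast
qed

lemma queries_meeting_ge_d_C_odd_k:
  assumes "cm_successful k n Qs" "odd k" "3 \<le> k" "2 * k * k \<le> n" "i \<in> {1..n}" "i' \<in> {1..n}"
    and "(i = i' \<and> even n) \<or> (i \<noteq> i' \<and> odd n)"
  shows "d_C (k - 1) (n - 1) \<le> card {t. t < length Qs \<and> (i \<in> Qs ! t \<or> i' \<in> Qs ! t)}"
proof (rule ccontr)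
  assume "\<not> ?thesis"
  then have "card {t. t < length Qs \<and> (i \<in> Qs ! t \<or> i' \<in> Qs ! t)} < d_C (k - 1) (n - 1)"
    by simp
  then obtain c where c: "count_true c {1..n} = n div 2" "\<not> c i" "\<not> c i'"
    and near: "\<And>t. t < length Qs \<Longrightarrow> i \<in> Qs ! t \<or> i' \<in> Qs ! t \<Longrightarrow> 2 * count_true c (Qs ! t) + 1 = k"
    using near_balanced_coloring_odd_k[OF assms(1-6)] by blast
  have consistent: "cm_consistent Qs c (paint_true c {j})" if j: "j \<in> {i, i'}" for j
  proof (rule cm_consistent_paint_true)
    show "\<And>x. x \<in> {j} \<Longrightarrow> \<not> c x"
      using c(2,3) j by blast
    fix t assume t: "t < length Qs" "{j} \<inter> Qs ! t \<noteq> {}"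
    then have "j \<in> Qs ! t"
      by blast
    moreover have "2 * count_true c (Qs ! t) + 1 = k"
      using near[OF t(1)] j \<open>j \<in> Qs ! t\<close> by blast
    ultimately show "finite (Qs ! t) \<and> {j} \<subseteq> Qs ! t \<and> 2 * count_true c (Qs ! t) + card {j} = card (Qs ! t)"
      using cm_successful_query[OF assms(1) t(1)] by simp
  qed
  have i: "{i} \<noteq> {}" "{i} \<subseteq> {1..n}" and i': "{i'} \<noteq> {}" "{i'} \<subseteq> {1..n}"
    using assms(5,6) by auto
  show False
  proof (cases "even n")
    case True
    have "\<not> cm_consistent Qs c (paint_true c {i})"
      by (rule painting_inconsistent_even_n[OF assms(1) True c(1) i]) (use c(2) in blast)
    then show False
      using consistent[of i] by blast
  next
    case False
    have "{i} \<inter> {i'} \<noteq> {}"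
      by (rule two_paintings_meet_odd_n[OF assms(1) False c(1) i i' _ consistent consistent])
        (use c(2,3) in blast)+
    then show False
      using assms(7) False by blast
  qed
qed

lemma length_bound_odd_k_even_n:
  assumes "cm_successful k n Qs" "odd k" "3 \<le> k" "even n" "2 * k * k \<le> n"
  shows "n * d_C (k - 1) (n - 1) \<le> length Qs * k"
proof -
  have "d_C (k - 1) (n - 1) \<le> query_degree Qs i" if "i \<in> {1..n}" for i
    using queries_meeting_ge_d_C_odd_k[OF assms(1-3,5) that that] assms(4)
    unfolding query_degree_def by simp
  then have "(\<Sum>i\<in>{1..n}. d_C (k - 1) (n - 1)) \<le> (\<Sum>i\<in>{1..n}. query_degree Qs i)"
    by (rule sum_mono)
  then show ?thesis
    using sum_query_degree_cm_successful[OF assms(1)] by simp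
qed

lemma length_bound_odd_k_odd_n:
  assumes "cm_successful k n Qs" "odd k" "3 \<le> k" "odd n" "2 * k * k \<le> n"
  shows "(n - 1) * d_C (k - 1) (n - 1) \<le> 2 * (length Qs * k)"
proof -
  define d where "d = d_C (k - 1) (n - 1)"
  have pair: "d \<le> query_degree Qs i + query_degree Qs j" if "i \<in> {1..n}" "j \<in> {1..n}" "i \<noteq> j" for i j
  proof -
    have "d \<le> card {t. t < length Qs \<and> (i \<in> Qs ! t \<or> j \<in> Qs ! t)}"
      using queries_meeting_ge_d_C_odd_k[OF assms(1-3,5) that(1,2)] assms(4) that(3)
      unfolding d_def by simp
    also have "{t. t < length Qs \<and> (i \<in> Qs ! t \<or> j \<in> Qs ! t)}
        = {t. t < length Qs \<and> i \<in> Qs ! t} \<union> {t. t < length Qs \<and> j \<in> Qs ! t}"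
      by auto
    also have "card \<dots> \<le> query_degree Qs i + query_degree Qs j"
      unfolding query_degree_def by (rule card_Un_le)
    finally show ?thesis .
  qed
  have "1 \<in> {1..n}"
    using odd_pos[OF assms(4)] by simp
  then obtain i0 where i0: "i0 \<in> {1..n}" "\<And>j. j \<in> {1..n} \<Longrightarrow> query_degree Qs i0 \<le> query_degree Qs j"
    using ex_has_least_nat[of "\<lambda>i. i \<in> {1..n}" 1 "query_degree Qs"] by blast
  have "(n - 1) * d = (\<Sum>j\<in>{1..n} - {i0}. d)"
    using i0(1) by simp
  also have "\<dots> \<le> (\<Sum>j\<in>{1..n} - {i0}. 2 * query_degree Qs j)"
  proof (rule sum_mono)
    fix j assume j: "j \<in> {1..n} - {i0}"
    then have "d \<le> query_degree Qs j + query_degree Qs i0"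
      using pair[of j i0] i0(1) by auto
    then show "d \<le> 2 * query_degree Qs j"
      using i0(2)[of j] j by auto
  qed
  also have "\<dots> \<le> (\<Sum>j\<in>{1..n}. 2 * query_degree Qs j)"
    by (rule sum_mono2) auto
  also have "\<dots> = 2 * (length Qs * k)"
    using sum_query_degree_cm_successful[OF assms(1)] by (simp add: sum_distrib_left[symmetric])
  finally show ?thesis
    unfolding d_def .
qed

lemma N_CM_witness:
  assumes "N_CM k n = enat q"
  obtains Qs where "length Qs = q" "cm_successful k n Qs"
proof -
  define S where "S = {q. \<exists>Qs. length Qs = q \<and> cm_successful k n Qs}"
  have "enat ` S \<noteq> {}"
    using assms unfolding N_CM_def S_def by (metis Inf_empty top_enat_def not_infinity_eq)
  then have "Inf (enat ` S) \<in> enat ` S"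
    by (meson ex_in_conv wellorder_InfI)
  then have "q \<in> S"
    using assms unfolding N_CM_def S_def by auto
  then show thesis
    using that unfolding S_def by blast
qed

lemma cm_bound_le_length:
  assumes "cm_successful k n Qs" "2 \<le> k" "2 * k * k + 4 * k \<le> n"
  shows "cm_bound k n \<le> real (length Qs)"
proof -
  define q where "q = length Qs"
  define d where "d = d_C (k - 1) (n - 1)"
  have div_le: "real a / real m \<le> real q" if "a \<le> q * m" "0 < m" for a m
  proof -
    have "real a \<le> real q * real m"
      using that(1) by (metis of_nat_le_iff of_nat_mult)
    then show ?thesis
      using that(2) by (simp add: pos_divide_le_eq)
  qed
  have ceiling_le: "real_of_int \<lceil>x\<rceil> \<le> real q" if "x \<le> real q" for x
  proof -
    have "\<lceil>x\<rceil> \<le> int q"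
      using that by (simp add: ceiling_le_iff)
    then show ?thesis
      by linarith
  qed
  have n_pos: "1 \<le> n"
    using assms(2,3) by linarith
  consider "even k" "even n" | "even k" "odd n" | "odd k" "even n" | "odd k" "odd n"
    by blast
  then show ?thesis
  proof cases
    case 1
    then have "2 * n \<le> q * (k + 1)"
      using length_bound_even_k_even_n[OF assms(1) 1] assms(3) unfolding q_def by simp
    then show ?thesis
      using div_le[of "2 * n" "k + 1"] 1 unfolding cm_bound_def q_def by (simp add: add.commute)
  next
    case 2
    then have "2 * n - 1 \<le> q * (k + 1)"
      using length_bound_even_k_odd_n[OF assms(1) 2 _ assms(2)] assms(3) unfolding q_def by simp
    then show ?thesis
      using div_le[of "2 * n - 1" "k + 1"] n_pos 2 unfolding cm_bound_def q_def
      by (simp add: of_nat_diff add.commute)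
  next
    case 3
    then have "3 \<le> k"
      using assms(2) by presburger
    then have "n * d \<le> q * k"
      using length_bound_odd_k_even_n[OF assms(1) 3(1) _ 3(2)] assms(3) unfolding q_def d_def by simp
    then show ?thesis
      using ceiling_le div_le[of "n * d" k] assms(2) 3 unfolding cm_bound_def q_def d_def by simp
  next
    case 4
    then have "3 \<le> k"
      using assms(2) by presburger
    then have "(n - 1) * d \<le> q * (2 * k)"
      using length_bound_odd_k_odd_n[OF assms(1) 4(1) _ 4(2)] assms(3) unfolding q_def d_def by simp
    then show ?thesis
      using ceiling_le div_le[of "(n - 1) * d" "2 * k"] n_pos assms(2) 4 unfolding cm_bound_def q_def d_def
      by (simp add: of_nat_diff)
  qed
qed

theorem theorem7:
  fixes k :: nat
  assumes "k \<ge> 2"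
  shows "\<exists>n0. \<forall>n \<ge> n0. \<forall>q. N_CM k n = enat q \<longrightarrow> real q \<ge> cm_bound k n"
proof (intro exI allI impI)
  fix n q
  assume "2 * k * k + 4 * k \<le> n" "N_CM k n = enat q"
  then obtain Qs where "length Qs = q" "cm_successful k n Qs"
    using N_CM_witness by blast
  then show "cm_bound k n \<le> real q"
    using cm_bound_le_length assms \<open>2 * k * k + 4 * k \<le> n\<close> by blast
qed

end
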